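(* Fix a prime power $q$ and $u\ge1$. Let $(C_i)_{i\ge1}$ be a family of linear $[n_i,k_i,d_i]$ codes over $\mathbb{F}_{q^u}$ with $n_i\to\infty$, $(k_i)$ nondecreasing, $\liminf_{i\to\infty}k_i/n_i\ge\alpha$ and $\liminf_{i\to\infty}d_i/n_i\ge\beta$ for some constants $0<\alpha,\beta<1$, and suppose there is a constant $W$ with $n_i\le Wn_{i-1}$ for all $i\ge2$. Then for every constant $c>0$ there are constants $R_1,A,B>0$ and $p_0\in(0,1)$ (depending only on $q,u$, the family, and $c$) such that the following holds. For every $n\ge2$ and every $[n,k]$ linear code $C\subseteq\mathbb{F}_q^n$ with $k<n$ and parity-check matrix $H\in\mathbb{F}_q^{(n-k)\times n}$ of rank $n-k$, there is an index $i$ with $k_i\ge n-k$ and $n_i\le A n$ such that, letting $\bar G'_i$ be the $(n-k)\times n_i$ matrix formed by any $n-k$ rows of a generator matrix of $C_i$, the list $S$ of rows of $\bar G_i'^{\,T}H$ is a test set for $C$ with designed probability $p_0$, and Algorithm DetermineCodeword run with this $S$ and $R=\lceil R_1\log n\rceil$ rounds: performs at most $B\,u\,n\log n$ operations in $\mathbb{F}_q$; uses storage of at most $B\,u\,n^2$ elements of $\mathbb{F}_q$ for $S$; always returns True when $\mathbf{x}\in C$; and returns True with probability at most $n^{-c}$ when $\mathbf{x}\notin C$.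
   Context: $\mathbb{F}_{q^u}$ is the degree-$u$ extension of $\mathbb{F}_q$, whose elements are represented as vectors of length $u$ over $\mathbb{F}_q$; $(\mathbf{x},\mathbf{y})=\sum_{j=1}^n x_jy_j$. A test set with designed probability $p\in(0,1)$ for $C$ is a finite nonempty collection $S$ of vectors in $\mathbb{F}_{q^u}^n$ (counted with multiplicity) such that for every $\mathbf{x}\in\mathbb{F}_q^n$: (1) $\mathbf{x}\in C$ iff $(\mathbf{x},\mathbf{y})=0$ for all $\mathbf{y}\in S$; (2) if some $\mathbf{y}\in S$ has $(\mathbf{x},\mathbf{y})\ne0$, then $\#\{\mathbf{y}\in S:(\mathbf{x},\mathbf{y})\ne0\}\ge(1-p)\#S$. Algorithm DetermineCodeword (with $R$ rounds, test set $S$ precomputed) on input $\mathbf{x}\in\mathbb{F}_q^n$: for $i=1,\dots,R$, choose $\mathbf{y}\in S$ uniformly at random, independently of previous rounds, and compute $z=(\mathbf{x},\mathbf{y})$; if $z\ne0$, return False. If all rounds give $z=0$, return True. *)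

theory Defs
  imports "HOL-Probability.Probability" "HOL-Library.Function_Algebras"
begin

text \<open>A vector of length n over a field is represented as a function
  nat => 'a that vanishes outside the index range 0..n-1.\<close>

definition vecs :: "nat \<Rightarrow> (nat \<Rightarrow> 'a::zero) set" where
  "vecs n = {v. \<forall>j\<ge>n. v j = 0}"

definition fscale :: "'a::field \<Rightarrow> (nat \<Rightarrow> 'a) \<Rightarrow> (nat \<Rightarrow> 'a)" where
  "fscale c v = (\<lambda>j. c * v j)"

lemma vector_space_fscale: "vector_space (fscale :: 'a::field \<Rightarrow> _)"
  by unfold_locales (auto simp: fscale_def algebra_simps fun_eq_iff)

definition hweight :: "nat \<Rightarrow> (nat \<Rightarrow> 'a::zero) \<Rightarrow> nat" where
  "hweight n v = card {j. j < n \<and> v j \<noteq> 0}"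

definition min_dist :: "nat \<Rightarrow> (nat \<Rightarrow> 'a::zero) set \<Rightarrow> nat" where
  "min_dist n C = Min {hweight n c | c. c \<in> C \<and> c \<noteq> 0}"

definition lin_code :: "nat \<Rightarrow> nat \<Rightarrow> (nat \<Rightarrow> 'a::field) set \<Rightarrow> bool" where
  "lin_code n k C \<longleftrightarrow> C \<subseteq> vecs n \<and> module.subspace fscale C \<and> vector_space.dim fscale C = k"

definition lin_code_d :: "nat \<Rightarrow> nat \<Rightarrow> nat \<Rightarrow> (nat \<Rightarrow> 'a::field) set \<Rightarrow> bool" where
  "lin_code_d n k d C \<longleftrightarrow> lin_code n k C \<and> min_dist n C = d"

text \<open>Matrices are lists of rows; each row is a vector of length n.
  The rank of a matrix is the dimension of its row space.\<close>

definition mat_rank :: "(nat \<Rightarrow> 'a::field) list \<Rightarrow> nat" where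
  "mat_rank M = vector_space.dim fscale (set M)"

definition is_matrix :: "nat \<Rightarrow> nat \<Rightarrow> (nat \<Rightarrow> 'a::zero) list \<Rightarrow> bool" where
  "is_matrix m n M \<longleftrightarrow> length M = m \<and> set M \<subseteq> vecs n"

definition parity_check :: "nat \<Rightarrow> nat \<Rightarrow> (nat \<Rightarrow> 'a::field) set \<Rightarrow> (nat \<Rightarrow> 'a) list \<Rightarrow> bool" where
  "parity_check n k C H \<longleftrightarrow> is_matrix (n - k) n H \<and> mat_rank H = n - k \<and>
     C = {x \<in> vecs n. \<forall>h\<in>set H. (\<Sum>j<n. x j * h j) = 0}"

definition gen_matrix :: "nat \<Rightarrow> (nat \<Rightarrow> 'a::field) set \<Rightarrow> (nat \<Rightarrow> 'a) list \<Rightarrow> bool" where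
  "gen_matrix n C G \<longleftrightarrow> set G \<subseteq> vecs n \<and> module.span fscale (set G) = C
     \<and> length G = vector_space.dim fscale C"

definition field_ext :: "('f::{finite,field} \<Rightarrow> 'e::{finite,field}) \<Rightarrow> nat \<Rightarrow> bool" where
  "field_ext emb u \<longleftrightarrow> emb 0 = 0 \<and> emb 1 = 1 \<and> (\<forall>a b. emb (a + b) = emb a + emb b)
     \<and> (\<forall>a b. emb (a * b) = emb a * emb b) \<and> CARD('e) = CARD('f) ^ u"

definition ip :: "nat \<Rightarrow> ('f \<Rightarrow> 'e::comm_ring_1) \<Rightarrow> (nat \<Rightarrow> 'f) \<Rightarrow> (nat \<Rightarrow> 'e) \<Rightarrow> 'e" where
  "ip n emb x y = (\<Sum>j<n. emb (x j) * y j)"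

definition test_set :: "nat \<Rightarrow> ('f::{finite,field} \<Rightarrow> 'e::{finite,field}) \<Rightarrow> (nat \<Rightarrow> 'f) set
     \<Rightarrow> real \<Rightarrow> (nat \<Rightarrow> 'e) multiset \<Rightarrow> bool" where
  "test_set n emb C p S \<longleftrightarrow> 0 < p \<and> p < 1 \<and> S \<noteq> {#} \<and> set_mset S \<subseteq> vecs n \<and>
     (\<forall>x\<in>vecs n.
        (x \<in> C \<longleftrightarrow> (\<forall>y\<in>#S. ip n emb x y = 0)) \<and>
        ((\<exists>y\<in>#S. ip n emb x y \<noteq> 0) \<longrightarrow>
           real (size (filter_mset (\<lambda>y. ip n emb x y \<noteq> 0) S)) \<ge> (1 - p) * real (size S)))"

text \<open>Cost (in operations of F_q) of one evaluation of (x,y) with x in F_q^n and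
  y in F_{q^u}^n, elements of F_{q^u} represented as length-u vectors over F_q:
  n scalar-times-vector products (u multiplications each) and n-1 vector
  additions (u additions each).\<close>

definition ip_cost :: "nat \<Rightarrow> nat \<Rightarrow> nat" where
  "ip_cost u n = u * n + u * (n - 1)"

text \<open>DetermineCodeword with R rounds: returns the distribution of the pair
  (output, number of F_q operations performed).\<close>

fun determine_codeword :: "nat \<Rightarrow> nat \<Rightarrow> ('f \<Rightarrow> 'e::comm_ring_1) \<Rightarrow> (nat \<Rightarrow> 'e) multiset
     \<Rightarrow> nat \<Rightarrow> (nat \<Rightarrow> 'f) \<Rightarrow> (bool \<times> nat) pmf" where
  "determine_codeword u n emb S 0 x = return_pmf (True, 0)"
| "determine_codeword u n emb S (Suc r) x =
     pmf_of_multiset S \<bind> (\<lambda>y.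
       if ip n emb x y \<noteq> 0 then return_pmf (False, ip_cost u n)
       else map_pmf (\<lambda>(b, c). (b, c + ip_cost u n)) (determine_codeword u n emb S r x))"

text \<open>Storage (in elements of F_q) of the test set S of vectors in F_{q^u}^n.\<close>

definition storage :: "nat \<Rightarrow> nat \<Rightarrow> 'a multiset \<Rightarrow> nat" where
  "storage u n S = u * n * size S"

text \<open>The rows of G'^T H, where G' is (n-k) x m over F_{q^u} and H is (n-k) x n over F_q.\<close>

definition rows_GtH :: "nat \<Rightarrow> ('f \<Rightarrow> 'e::comm_ring_1) \<Rightarrow> (nat \<Rightarrow> 'e) list \<Rightarrow> (nat \<Rightarrow> 'f) list
     \<Rightarrow> (nat \<Rightarrow> 'e) list" where
  "rows_GtH m emb G' H =
     map (\<lambda>j. (\<lambda>t. \<Sum>l<length G'. (G' ! l) j * emb ((H ! l) t))) [0..<m]"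

end

(* The rows y_j of G'^T H pair with x as (x, y_j) = ((Hx)^T G')_j, so the vector of all
   pairings is a codeword of C_i; it vanishes iff Hx = 0, i.e. iff x is in C, because the rows
   of G' are independent and the embedding of F_q into F_{q^u} is injective. For x not in C the
   number of rows with nonzero pairing is therefore at least d_i >= (beta/2) n_i, so the rows
   form a test set with designed probability p0 = 1 - beta/2, and R = ceil(R1 ln n) independent
   rounds with R1 = c / (-ln p0) accept x with probability at most p0^R <= n^-c. Taking i least
   with k_i >= n - k, the predecessor has k_{i-1} < n, hence n_{i-1} = O(n), and the growth
   bound n_i <= W n_{i-1} gives n_i = O(n); storage u n n_i and cost R (2 u n) follow. *)

theory Submission
  imports Defs
begin

interpretation fs: vector_space "fscale :: 'a::field \<Rightarrow> (nat \<Rightarrow> 'a) \<Rightarrow> (nat \<Rightarrow> 'a)"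
  by (rule vector_space_fscale)

lemma sum_apply: "(\<Sum>i\<in>A. f i) x = (\<Sum>i\<in>A. f i x :: 'b::comm_monoid_add)"
  by (induction A rule: infinite_finite_induct) auto

lemma vecs_eq_0_iff:
  assumes "v \<in> vecs n"
  shows "v = 0 \<longleftrightarrow> (\<forall>j<n. v j = 0)"
  using assms by (auto simp: vecs_def fun_eq_iff) (metis not_le)

lemma field_ext_sum:
  assumes "field_ext emb u"
  shows "emb (\<Sum>i\<in>A. f i) = (\<Sum>i\<in>A. emb (f i))"
  using assms by (induction A rule: infinite_finite_induct) (auto simp: field_ext_def)

lemma field_ext_eq_0_iff:
  assumes "field_ext emb u"
  shows "emb a = 0 \<longleftrightarrow> a = 0"
proof
  assume a: "emb a = 0"
  show "a = 0"
  proof (rule ccontr)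
    assume "a \<noteq> 0"
    then have "emb (a * inverse a) = 1"
      using assms by (simp add: field_ext_def)
    with a assms show False by (simp add: field_ext_def)
  qed
qed (use assms in \<open>simp add: field_ext_def\<close>)

lemma min_dist_le_hweight:
  assumes "c \<in> C" "c \<noteq> 0"
  shows "min_dist n C \<le> hweight n c"
proof -
  have "hweight n v \<le> n" for v :: "nat \<Rightarrow> 'a"
    unfolding hweight_def using card_mono[of "{..<n}" "{j. j < n \<and> v j \<noteq> 0}"] by auto
  then have "{hweight n c | c. c \<in> C \<and> c \<noteq> 0} \<subseteq> {..n}"
    by blast
  then have "finite {hweight n c | c. c \<in> C \<and> c \<noteq> 0}"
    by (rule finite_subset) simp
  then show ?thesis
    unfolding min_dist_def using assms by (intro Min_le) auto
qed

lemma gen_matrix_distinct_independent: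
  assumes "gen_matrix n C G"
  shows "distinct G \<and> fs.independent (set G)"
proof -
  obtain B where B: "B \<subseteq> set G" "fs.independent B" "set G \<subseteq> fs.span B" "card B = fs.dim (set G)"
    by (rule fs.basis_exists)
  have "length G = fs.dim (set G)"
    using assms fs.dim_span[of "set G"] by (simp add: gen_matrix_def)
  also have "\<dots> \<le> card (set G)"
    using B by (metis card_mono finite_set)
  finally have card: "card (set G) = length G"
    using card_length[of G] by simp
  then have "B = set G"
    using B \<open>length G = fs.dim (set G)\<close> by (intro card_subset_eq) auto
  then show ?thesis
    using B card by (simp add: card_distinct)
qed

lemma gen_matrix_select_rows:
  assumes G: "gen_matrix m D G" and idx: "distinct idx" "\<forall>l\<in>set idx. l < length G"
  shows "set (map (nth G) idx) \<subseteq> D" "distinct (map (nth G) idx)"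
    "fs.independent (set (map (nth G) idx))"
proof -
  have sub: "set (map (nth G) idx) \<subseteq> set G"
    using idx(2) by auto
  then show "set (map (nth G) idx) \<subseteq> D"
    using G fs.span_superset by (auto simp: gen_matrix_def)
  have "distinct G" "fs.independent (set G)"
    using gen_matrix_distinct_independent[OF G] by auto
  then show "fs.independent (set (map (nth G) idx))"
    using fs.independent_mono sub by blast
  show "distinct (map (nth G) idx)"
    using idx \<open>distinct G\<close> by (auto simp: distinct_map inj_on_def nth_eq_iff_index_eq)
qed

lemma independent_sum_nth_eq_0_iff:
  assumes indep: "fs.independent (set G)" and dist: "distinct G"
  shows "(\<Sum>l<length G. fscale (a l) (G ! l)) = 0 \<longleftrightarrow> (\<forall>l<length G. a l = 0)"
proof
  assume sum0: "(\<Sum>l<length G. fscale (a l) (G ! l)) = 0"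
  have inj: "inj_on (nth G) {..<length G}"
    using dist by (simp add: inj_on_nth)
  define c where "c v = a (the_inv_into {..<length G} (nth G) v)" for v
  have "set G = nth G ` {..<length G}"
    by (auto simp: in_set_conv_nth)
  then have "(\<Sum>v\<in>set G. fscale (c v) v) = (\<Sum>l<length G. fscale (a l) (G ! l))"
    unfolding c_def by (simp add: sum.reindex[OF inj] the_inv_into_f_f[OF inj])
  then have "\<forall>v\<in>set G. c v = 0"
    using sum0 fs.independentD[OF indep] by auto
  then show "\<forall>l<length G. a l = 0"
    unfolding c_def using the_inv_into_f_f[OF inj] by (metis lessThan_iff nth_mem)
qed (simp add: fscale_def fun_eq_iff sum_apply)

definition syndrome :: "nat \<Rightarrow> (nat \<Rightarrow> 'a::comm_semiring_0) list \<Rightarrow> (nat \<Rightarrow> 'a) \<Rightarrow> nat \<Rightarrow> 'a" where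
  "syndrome n H x l = (\<Sum>j<n. x j * (H ! l) j)"

lemma parity_check_mem_iff:
  assumes "parity_check n k C H" "x \<in> vecs n"
  shows "x \<in> C \<longleftrightarrow> (\<forall>l<length H. syndrome n H x l = 0)"
  using assms by (auto simp: parity_check_def syndrome_def all_set_conv_all_nth)

lemma ip_rows_GtH:
  assumes ext: "field_ext emb u" and "j < m"
  shows "ip n emb x (rows_GtH m emb G' H ! j)
       = (\<Sum>l<length G'. fscale (emb (syndrome n H x l)) (G' ! l)) j"
proof -
  have "ip n emb x (rows_GtH m emb G' H ! j)
      = (\<Sum>t<n. \<Sum>l<length G'. (G' ! l) j * (emb (x t) * emb ((H ! l) t)))"
    using \<open>j < m\<close> by (simp add: ip_def rows_GtH_def sum_distrib_left mult_ac)
  also have "\<dots> = (\<Sum>l<length G'. \<Sum>t<n. (G' ! l) j * (emb (x t) * emb ((H ! l) t)))"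
    by (rule sum.swap)
  also have "\<dots> = (\<Sum>l<length G'. fscale (emb (syndrome n H x l)) (G' ! l)) j"
    using ext by (simp add: syndrome_def field_ext_sum[OF ext] sum_apply fscale_def
        sum_distrib_left field_ext_def mult_ac)
  finally show ?thesis .
qed

lemma rows_GtH_vecs:
  assumes "field_ext emb u" "set H \<subseteq> vecs n" "length G' \<le> length H"
  shows "set (rows_GtH m emb G' H) \<subseteq> vecs n"
proof -
  have "(H ! l) t = 0" if "l < length G'" "n \<le> t" for l t
  proof -
    have "H ! l \<in> vecs n"
      using that assms(3) by (intro subsetD[OF assms(2)] nth_mem) simp
    with \<open>n \<le> t\<close> show ?thesis by (simp add: vecs_def)
  qed
  then show ?thesis
    using assms(1) by (auto simp: rows_GtH_def vecs_def field_ext_def)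
qed

lemma rows_GtH_pairing_codeword:
  fixes emb :: "'f::{finite,field} \<Rightarrow> 'e::{finite,field}"
  assumes ext: "field_ext emb u" and H: "parity_check n k C H" and D: "lin_code m kk D"
    and G': "set G' \<subseteq> D" "distinct G'" "fs.independent (set G')" "length G' = n - k"
    and x: "x \<in> vecs n"
  obtains w where "w \<in> D" "x \<in> C \<longleftrightarrow> w = 0"
    "\<And>j. j < m \<Longrightarrow> w j = ip n emb x (rows_GtH m emb G' H ! j)"
proof
  \<comment> \<open>The pairings of x with the rows of G'^T H are the entries of the codeword (Hx)^T G'.\<close>
  define w where "w = (\<Sum>l<length G'. fscale (emb (syndrome n H x l)) (G' ! l))"
  show "w j = ip n emb x (rows_GtH m emb G' H ! j)" if "j < m" for j
    unfolding w_def using ip_rows_GtH[OF ext that] by simp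
  have "fs.subspace D"
    using D by (simp add: lin_code_def)
  then show "w \<in> D"
    unfolding w_def using G'(1) by (intro fs.subspace_sum fs.subspace_scale) auto
  have "length H = n - k"
    using H by (simp add: parity_check_def is_matrix_def)
  then have "x \<in> C \<longleftrightarrow> (\<forall>l<length G'. emb (syndrome n H x l) = 0)"
    using parity_check_mem_iff[OF H x] field_ext_eq_0_iff[OF ext] G'(4) by simp
  then show "x \<in> C \<longleftrightarrow> w = 0"
    unfolding w_def independent_sum_nth_eq_0_iff[OF G'(3,2)] .
qed

lemma rows_GtH_test_set:
  fixes emb :: "'f::{finite,field} \<Rightarrow> 'e::{finite,field}"
  assumes ext: "field_ext emb u" and H: "parity_check n k C H"
    and D: "lin_code_d m kk d D" and "0 < m"
    and G': "set G' \<subseteq> D" "distinct G'" "fs.independent (set G')" "length G' = n - k"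
    and p: "0 < p" "p < 1" "(1 - p) * real m \<le> real d"
  shows "test_set n emb C p (mset (rows_GtH m emb G' H))"
proof -
  define S where "S = mset (rows_GtH m emb G' H)"
  have len: "length (rows_GtH m emb G' H) = m"
    by (simp add: rows_GtH_def)
  then have sizeS: "size S = m"
    by (simp add: S_def)
  have "set_mset S \<subseteq> vecs n"
    unfolding S_def using H G'(4) rows_GtH_vecs[OF ext]
    by (simp add: parity_check_def is_matrix_def)
  moreover have "(x \<in> C \<longleftrightarrow> (\<forall>y\<in>#S. ip n emb x y = 0)) \<and>
        ((\<exists>y\<in>#S. ip n emb x y \<noteq> 0) \<longrightarrow>
           real (size (filter_mset (\<lambda>y. ip n emb x y \<noteq> 0) S)) \<ge> (1 - p) * real (size S))"
    if x: "x \<in> vecs n" for x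
  proof -
    have code: "lin_code m kk D" "min_dist m D = d"
      using D by (auto simp: lin_code_d_def)
    obtain w where "w \<in> D" and C_iff_w: "x \<in> C \<longleftrightarrow> w = 0"
      and w_ip: "\<And>j. j < m \<Longrightarrow> w j = ip n emb x (rows_GtH m emb G' H ! j)"
      using rows_GtH_pairing_codeword[OF ext H code(1) G' x] by blast
    then have "w \<in> vecs m"
      using code(1) by (auto simp: lin_code_def)
    then have w_iff_S: "w = 0 \<longleftrightarrow> (\<forall>y\<in>#S. ip n emb x y = 0)"
      using vecs_eq_0_iff[of w m] w_ip len by (simp add: S_def all_set_conv_all_nth)
    have "size (filter_mset (\<lambda>y. ip n emb x y \<noteq> 0) S)
        = card {j. j < length (rows_GtH m emb G' H) \<and> ip n emb x (rows_GtH m emb G' H ! j) \<noteq> 0}"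
      unfolding S_def by (simp flip: mset_filter add: length_filter_conv_card)
    also have "\<dots> = hweight m w"
      unfolding hweight_def len using w_ip by (intro arg_cong[where f = card]) auto
    finally have count: "size (filter_mset (\<lambda>y. ip n emb x y \<noteq> 0) S) = hweight m w" .
    show ?thesis
    proof (intro conjI impI)
      show "x \<in> C \<longleftrightarrow> (\<forall>y\<in>#S. ip n emb x y = 0)"
        using C_iff_w w_iff_S by simp
      assume "\<exists>y\<in>#S. ip n emb x y \<noteq> 0"
      then have "w \<noteq> 0" using w_iff_S by auto
      then have "d \<le> hweight m w"
        using min_dist_le_hweight[OF \<open>w \<in> D\<close>, of m] code(2) by simp
      then show "(1 - p) * real (size S) \<le> real (size (filter_mset (\<lambda>y. ip n emb x y \<noteq> 0) S))"
        using count p(3) sizeS by simp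
    qed
  qed
  ultimately show ?thesis
    unfolding test_set_def S_def[symmetric] using p \<open>0 < m\<close> sizeS by auto
qed

lemma determine_codeword_ops_le:
  assumes "S \<noteq> {#}" "(b, ops) \<in> set_pmf (determine_codeword u n emb S r x)"
  shows "ops \<le> r * ip_cost u n"
  using assms(2)
proof (induction r arbitrary: b ops)
  case (Suc r)
  with assms(1) show ?case
    by (auto split: if_splits dest!: Suc.IH)
qed simp

lemma determine_codeword_accepts:
  assumes "S \<noteq> {#}" "\<forall>y\<in>#S. ip n emb x y = 0"
    and "(b, ops) \<in> set_pmf (determine_codeword u n emb S r x)"
  shows b
  using assms(3)
proof (induction r arbitrary: b ops)
  case (Suc r)
  with assms(1,2) show ?case
    by (auto split: if_splits dest!: Suc.IH)
qed simp

lemma measure_pmf_of_multiset: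
  assumes "S \<noteq> {#}"
  shows "measure_pmf.prob (pmf_of_multiset S) {y. P y} = real (size (filter_mset P S)) / real (size S)"
proof -
  have "measure_pmf.prob (pmf_of_multiset S) {y. P y}
      = measure_pmf.prob (pmf_of_multiset S) ({y. P y} \<inter> set_mset S)"
    using measure_Int_set_pmf[of "pmf_of_multiset S" "{y. P y}"] assms by simp
  also have "\<dots> = (\<Sum>y\<in>set_mset (filter_mset P S). real (count (filter_mset P S) y)) / real (size S)"
    using assms by (subst measure_measure_pmf_finite) (auto simp: sum_divide_distrib intro: sum.cong)
  also have "\<dots> = real (size (filter_mset P S)) / real (size S)"
    by (simp add: size_multiset_overloaded_eq)
  finally show ?thesis .
qed

lemma determine_codeword_accept_prob_le:
  assumes S: "S \<noteq> {#}"
  shows "measure_pmf.prob (determine_codeword u n emb S r x) {(b, ops). b}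
    \<le> measure_pmf.prob (pmf_of_multiset S) {y. ip n emb x y = 0} ^ r"
proof -
  define q where "q = measure_pmf.prob (pmf_of_multiset S) {y. ip n emb x y = 0}"
  let ?E = "{(b, ops). b} :: (bool \<times> nat) set"
  have "emeasure (determine_codeword u n emb S r x) ?E \<le> ennreal (q ^ r)"
  proof (induction r)
    case (Suc r)
    have "emeasure (determine_codeword u n emb S (Suc r) x) ?E
        = (\<integral>\<^sup>+y. (if ip n emb x y \<noteq> 0 then 0 else emeasure (determine_codeword u n emb S r x) ?E)
            \<partial>pmf_of_multiset S)"
      by (auto simp: vimage_def case_prod_unfold intro!: nn_integral_cong)
    also have "\<dots> \<le> (\<integral>\<^sup>+y. ennreal (q ^ r) * indicator {y. ip n emb x y = 0} y \<partial>pmf_of_multiset S)"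
      using Suc.IH by (intro nn_integral_mono) auto
    also have "\<dots> = ennreal (q ^ r) * emeasure (pmf_of_multiset S) {y. ip n emb x y = 0}"
      by (rule nn_integral_cmult_indicator) simp
    also have "\<dots> = ennreal (q ^ Suc r)"
      by (simp add: q_def measure_pmf.emeasure_eq_measure ennreal_mult'[symmetric] mult.commute)
    finally show ?case .
  qed (simp add: measure_pmf.emeasure_le_1)
  then show ?thesis
    by (simp add: q_def measure_pmf.emeasure_eq_measure ennreal_le_iff)
qed

lemma test_set_prob_pairing_zero_le:
  assumes T: "test_set n emb C p S" and x: "x \<in> vecs n" "x \<notin> C"
  shows "measure_pmf.prob (pmf_of_multiset S) {y. ip n emb x y = 0} \<le> p"
proof -
  let ?Z = "filter_mset (\<lambda>y. ip n emb x y = 0) S" and ?N = "filter_mset (\<lambda>y. ip n emb x y \<noteq> 0) S"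
  have S: "S \<noteq> {#}" and "0 < p" and "\<exists>y\<in>#S. ip n emb x y \<noteq> 0"
    using T x by (auto simp: test_set_def)
  then have "(1 - p) * real (size S) \<le> real (size ?N)"
    using T x by (auto simp: test_set_def)
  moreover have "size S = size ?Z + size ?N"
    by (metis multiset_partition size_union)
  moreover have "0 < size S"
    using S by (simp add: nonempty_has_size)
  ultimately show ?thesis
    unfolding measure_pmf_of_multiset[OF S] using \<open>0 < p\<close> by (simp add: divide_le_eq algebra_simps)
qed

lemma determine_codeword_false_accept_le:
  assumes T: "test_set n emb C p S" and x: "x \<in> vecs n" "x \<notin> C"
  shows "measure_pmf.prob (determine_codeword u n emb S r x) {(b, ops). b} \<le> p ^ r"
proof -
  have "S \<noteq> {#}"
    using T by (simp add: test_set_def)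
  then have "measure_pmf.prob (determine_codeword u n emb S r x) {(b, ops). b}
      \<le> measure_pmf.prob (pmf_of_multiset S) {y. ip n emb x y = 0} ^ r"
    by (rule determine_codeword_accept_prob_le)
  also have "\<dots> \<le> p ^ r"
    by (intro power_mono test_set_prob_pairing_zero_le[OF T x]) simp
  finally show ?thesis .
qed

lemma power_nat_ceiling_le_powr:
  fixes p c x :: real
  assumes p: "0 < p" "p < 1" and x: "1 \<le> x" and c: "0 \<le> c"
  shows "p ^ nat \<lceil>c / - ln p * ln x\<rceil> \<le> x powr - c"
proof -
  have "0 \<le> c / - ln p * ln x"
    using p x c by (simp add: divide_nonneg_neg)
  then have "p ^ nat \<lceil>c / - ln p * ln x\<rceil> \<le> p powr (c / - ln p * ln x)"
    using p by (simp add: powr_realpow[symmetric] powr_mono' real_nat_ceiling_ge)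
  also have "\<dots> = x powr - c"
    using p x by (simp add: powr_def)
  finally show ?thesis .
qed

lemma determine_codeword_ops_le_n_ln_n:
  assumes S: "S \<noteq> {#}" and n: "2 \<le> n" and R1: "0 \<le> R1"
    and run: "(b, ops) \<in> set_pmf (determine_codeword u n emb S (nat \<lceil>R1 * ln (real n)\<rceil>) x)"
  shows "real ops \<le> (2 * R1 + 2 / ln 2) * real u * real n * ln (real n)"
proof -
  have ln2: "ln 2 \<le> ln (real n)"
    using n by simp
  have "real ops \<le> real (nat \<lceil>R1 * ln (real n)\<rceil>) * real (ip_cost u n)"
    using determine_codeword_ops_le[OF S run] by (metis of_nat_le_iff of_nat_mult)
  also have "\<dots> \<le> (R1 * ln (real n) + 1) * (2 * real u * real n)"
  proof (rule mult_mono)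
    show "real (nat \<lceil>R1 * ln (real n)\<rceil>) \<le> R1 * ln (real n) + 1"
      using R1 n by (simp add: of_nat_int_ceiling)
    have "ip_cost u n \<le> 2 * u * n"
      unfolding ip_cost_def using mult_le_mono2[OF diff_le_self, of n 1 u] by simp
    then show "real (ip_cost u n) \<le> 2 * real u * real n"
      by (metis of_nat_le_iff of_nat_mult of_nat_numeral)
  qed (use R1 n in auto)
  also have "R1 * ln (real n) + 1 \<le> (R1 + 1 / ln 2) * ln (real n)"
    using ln2 by (simp add: algebra_simps divide_simps)
  finally show ?thesis
    using n by (simp add: mult_right_mono algebra_simps)
qed

definition determine_codeword_spec ::
    "nat \<Rightarrow> nat \<Rightarrow> ('f::zero \<Rightarrow> 'e::comm_ring_1) \<Rightarrow> (nat \<Rightarrow> 'f) set \<Rightarrow> (nat \<Rightarrow> 'e) multiset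
      \<Rightarrow> nat \<Rightarrow> real \<Rightarrow> real \<Rightarrow> bool" where
  "determine_codeword_spec u n emb C S R B c \<longleftrightarrow>
     real (storage u n S) \<le> B * real u * real n ^ 2 \<and>
     (\<forall>x\<in>vecs n.
        (\<forall>(b, ops)\<in>set_pmf (determine_codeword u n emb S R x).
            real ops \<le> B * real u * real n * ln (real n)) \<and>
        (x \<in> C \<longrightarrow> (\<forall>(b, ops)\<in>set_pmf (determine_codeword u n emb S R x). b)) \<and>
        (x \<notin> C \<longrightarrow> measure_pmf.prob (determine_codeword u n emb S R x) {(b, ops). b}
                     \<le> real n powr (- c)))"

lemma test_set_determine_codeword_spec:
  fixes emb :: "'f::{finite,field} \<Rightarrow> 'e::{finite,field}"
  assumes T: "test_set n emb C p S" and n: "2 \<le> n" and c: "0 \<le> c"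
    and size: "real (size S) \<le> A * real n" and B: "A + 2 * (c / - ln p) + 2 / ln 2 \<le> B"
  defines "R \<equiv> nat \<lceil>c / - ln p * ln (real n)\<rceil>"
  shows "determine_codeword_spec u n emb C S R B c"
proof -
  have p: "0 < p" "p < 1" and S: "S \<noteq> {#}"
    using T by (auto simp: test_set_def)
  have R1: "0 \<le> c / - ln p"
    using p c by (simp add: divide_nonneg_neg)
  have "0 \<le> A * real n"
    using size of_nat_0_le_iff order_trans by blast
  then have "0 \<le> A"
    using n by (simp add: zero_le_mult_iff)
  moreover have "0 \<le> 2 / ln (2::real)"
    by simp
  ultimately have AB: "A \<le> B" and B': "2 * (c / - ln p) + 2 / ln 2 \<le> B"
    using R1 B by linarith+
  have "real (storage u n S) = real u * real n * real (size S)"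
    by (simp add: storage_def)
  also have "\<dots> \<le> real u * real n * (B * real n)"
    using order_trans[OF size mult_right_mono[OF AB]] by (intro mult_left_mono) auto
  finally have storage: "real (storage u n S) \<le> B * real u * real n ^ 2"
    by (simp add: power2_eq_square mult_ac)
  have ops: "real ops \<le> B * real u * real n * ln (real n)"
    if "(b, ops) \<in> set_pmf (determine_codeword u n emb S R x)" for b ops x
  proof -
    have "real ops \<le> (2 * (c / - ln p) + 2 / ln 2) * real u * real n * ln (real n)"
      using determine_codeword_ops_le_n_ln_n[OF S n R1] that by (simp add: R_def mult.assoc)
    also have "\<dots> \<le> B * real u * real n * ln (real n)"
      using B' n by (intro mult_right_mono) auto
    finally show ?thesis .
  qed
  have accept: "b" if "x \<in> vecs n" "x \<in> C" "(b, ops) \<in> set_pmf (determine_codeword u n emb S R x)"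
    for b ops x
    using T that determine_codeword_accepts[OF S] by (fastforce simp: test_set_def)
  have reject: "measure_pmf.prob (determine_codeword u n emb S R x) {(b, ops). b} \<le> real n powr (- c)"
    if "x \<in> vecs n" "x \<notin> C" for x
    using order_trans[OF determine_codeword_false_accept_le[OF T that]
        power_nat_ceiling_le_powr[OF p _ c, of "real n"]] n
    unfolding R_def by simp
  show ?thesis
    unfolding determine_codeword_spec_def using storage ops accept reject by blast
qed

lemma liminf_ratio_eventually_gt:
  fixes f g :: "nat \<Rightarrow> nat"
  assumes "ereal \<alpha> \<le> liminf (\<lambda>i. ereal (real (f i) / real (g i)))" "a < \<alpha>"
    and "filterlim g at_top sequentially"
  shows "eventually (\<lambda>i. a * real (g i) < real (f i) \<and> 0 < g i) sequentially"
proof -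
  have "eventually (\<lambda>i. ereal a < ereal (real (f i) / real (g i))) sequentially"
    using assms(1,2) by (intro less_LiminfD less_le_trans[OF _ assms(1)]) simp
  moreover have "eventually (\<lambda>i. 1 \<le> g i) sequentially"
    using assms(3) by (simp add: filterlim_at_top)
  ultimately show ?thesis
    by eventually_elim (simp add: less_divide_eq)
qed

lemma index_with_dim_ge_and_length_le:
  fixes nf kf :: "nat \<Rightarrow> nat" and a W :: real
  assumes nf: "filterlim nf at_top sequentially" and a: "0 < a" and N: "1 \<le> N"
    and kf: "\<forall>i\<ge>N. a * real (nf i) < real (kf i)"
    and W: "\<forall>i\<ge>2. real (nf i) \<le> W * real (nf (i - 1))"
    and n: "1 \<le> n" "K \<le> n"
  obtains i where "N \<le> i" "K \<le> kf i" "real (nf i) \<le> (real (nf N) + max W 0 / a) * real n"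
proof -
  have "eventually (\<lambda>i. nat \<lceil>real n / a\<rceil> \<le> nf i) sequentially"
    using nf filterlim_at_top by blast
  then obtain i' where "nat \<lceil>real n / a\<rceil> \<le> nf i'" "N \<le> i'"
    using eventually_ge_at_top[of N] unfolding eventually_sequentially by (meson nle_le order_trans)
  then have "real n / a \<le> real (nf i')"
    using real_nat_ceiling_ge[of "real n / a"] of_nat_mono by (blast intro: order_trans)
  moreover have "a * real (nf i') < real (kf i')"
    using kf \<open>N \<le> i'\<close> by blast
  ultimately have "real n < real (kf i')"
    using a by (simp add: pos_divide_le_eq mult.commute)
  then have ex: "\<exists>i. N \<le> i \<and> K \<le> kf i"
    using \<open>N \<le> i'\<close> n by (intro exI[of _ i']) auto
  define i where "i = (LEAST i. N \<le> i \<and> K \<le> kf i)"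
  have i: "N \<le> i" "K \<le> kf i"
    using LeastI_ex[OF ex] by (auto simp: i_def)
  have nonneg: "0 \<le> real (nf N) * real n" "0 \<le> max W 0 / a * real n"
    using a by auto
  have "real (nf i) \<le> (real (nf N) + max W 0 / a) * real n"
  proof (cases "i = N")
    case True
    have "real (nf N) \<le> real (nf N) * real n"
      using n by (simp add: mult_le_cancel_left1)
    with True nonneg show ?thesis
      by (simp add: distrib_right)
  next
    case False
    \<comment> \<open>By minimality of i, its predecessor has dimension below n, hence length below n/a.\<close>
    then have j: "N \<le> i - 1" "2 \<le> i"
      using i(1) N by auto
    then have "\<not> (N \<le> i - 1 \<and> K \<le> kf (i - 1))"
      unfolding i_def by (intro not_less_Least) (simp add: i_def[symmetric])
    with j have "kf (i - 1) < K"
      by simp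
    then have "a * real (nf (i - 1)) < real n"
      using kf j(1) n(2) by (metis of_nat_less_iff order_less_le_trans order_less_trans)
    then have "real (nf (i - 1)) \<le> real n / a"
      using a by (simp add: pos_le_divide_eq mult.commute)
    then have "max W 0 * real (nf (i - 1)) \<le> max W 0 / a * real n"
      using mult_left_mono[of _ _ "max W 0"] by fastforce
    moreover have "real (nf i) \<le> max W 0 * real (nf (i - 1))"
      using W j(2) order_trans[OF _ mult_right_mono[of W "max W 0"]] by simp
    ultimately show ?thesis
      using nonneg(1) unfolding distrib_right by linarith
  qed
  with i show ?thesis by (rule that)
qed

lemma code_family_test_set:
  fixes emb :: "'f::{finite,field} \<Rightarrow> 'e::{finite,field}"
  assumes ext: "field_ext emb u"
    and codes: "\<forall>i\<ge>1. lin_code_d (nf i) (kf i) (df i) (Cf i)"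
    and nf: "filterlim nf at_top sequentially"
    and W: "\<forall>i\<ge>2. real (nf i) \<le> W * real (nf (i - 1))"
    and a: "0 < a" and p: "0 < p" "p < 1" and N: "1 \<le> N"
    and large: "\<forall>i\<ge>N. a * real (nf i) < real (kf i) \<and> 0 < nf i \<and> (1 - p) * real (nf i) \<le> real (df i)"
    and n: "1 \<le> n" and H: "parity_check n k C H"
  obtains i where "1 \<le> i" "n - k \<le> kf i" "real (nf i) \<le> (real (nf N) + max W 0 / a) * real n"
    "\<And>G idx. gen_matrix (nf i) (Cf i) G \<Longrightarrow> distinct idx \<Longrightarrow> length idx = n - k
      \<Longrightarrow> \<forall>l\<in>set idx. l < kf i
      \<Longrightarrow> test_set n emb C p (mset (rows_GtH (nf i) emb (map (nth G) idx) H))"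
proof -
  obtain i where i: "N \<le> i" "n - k \<le> kf i" "real (nf i) \<le> (real (nf N) + max W 0 / a) * real n"
  proof (rule index_with_dim_ge_and_length_le[where K = "n - k", OF nf a N _ W n])
    show "\<forall>i\<ge>N. a * real (nf i) < real (kf i)"
      using large by blast
  qed auto
  have code: "lin_code_d (nf i) (kf i) (df i) (Cf i)"
    using codes i(1) N by simp
  have pos: "0 < nf i" and dist: "(1 - p) * real (nf i) \<le> real (df i)"
    using large i(1) by blast+
  have T: "test_set n emb C p (mset (rows_GtH (nf i) emb (map (nth G) idx) H))"
    if G: "gen_matrix (nf i) (Cf i) G" and idx: "distinct idx" "length idx = n - k"
      "\<forall>l\<in>set idx. l < kf i" for G idx
  proof -
    have "length G = kf i"
      using G code by (simp add: gen_matrix_def lin_code_d_def lin_code_def)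
    then have rows: "set (map (nth G) idx) \<subseteq> Cf i" "distinct (map (nth G) idx)"
      "fs.independent (set (map (nth G) idx))"
      using gen_matrix_select_rows[OF G idx(1)] idx(3) by auto
    show ?thesis
      using idx(2) by (intro rows_GtH_test_set[OF ext H code pos rows _ p dist]) simp
  qed
  from i(1) N have "1 \<le> i"
    by simp
  then show ?thesis
    by (rule that[OF _ i(2,3) T])
qed

lemma code_family_determine_codeword:
  fixes emb :: "'f::{finite,field} \<Rightarrow> 'e::{finite,field}"
  assumes ext: "field_ext emb u"
    and codes: "\<forall>i\<ge>1. lin_code_d (nf i) (kf i) (df i) (Cf i)"
    and nf: "filterlim nf at_top sequentially"
    and W: "\<forall>i\<ge>2. real (nf i) \<le> W * real (nf (i - 1))"
    and a: "0 < a" and p: "0 < p" "p < 1" and N: "1 \<le> N"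
    and large: "\<forall>i\<ge>N. a * real (nf i) < real (kf i) \<and> 0 < nf i \<and> (1 - p) * real (nf i) \<le> real (df i)"
    and c: "0 \<le> c" and B: "real (nf N) + max W 0 / a + 2 * (c / - ln p) + 2 / ln 2 \<le> B"
    and n: "2 \<le> n" and H: "parity_check n k C H"
  shows "\<exists>i\<ge>1. kf i \<ge> n - k \<and> real (nf i) \<le> (real (nf N) + max W 0 / a) * real n \<and>
    (\<forall>G idx. gen_matrix (nf i) (Cf i) G \<and> distinct idx \<and> length idx = n - k
        \<and> (\<forall>l\<in>set idx. l < kf i) \<longrightarrow>
      test_set n emb C p (mset (rows_GtH (nf i) emb (map (nth G) idx) H)) \<and>
      determine_codeword_spec u n emb C (mset (rows_GtH (nf i) emb (map (nth G) idx) H))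
        (nat \<lceil>c / - ln p * ln (real n)\<rceil>) B c)"
proof -
  have "1 \<le> n"
    using n by simp
  then obtain i where i: "1 \<le> i" "n - k \<le> kf i" "real (nf i) \<le> (real (nf N) + max W 0 / a) * real n"
    and T: "\<And>G idx. gen_matrix (nf i) (Cf i) G \<Longrightarrow> distinct idx \<Longrightarrow> length idx = n - k
      \<Longrightarrow> \<forall>l\<in>set idx. l < kf i
      \<Longrightarrow> test_set n emb C p (mset (rows_GtH (nf i) emb (map (nth G) idx) H))"
    using code_family_test_set[OF ext codes nf W a p N large _ H] by blast
  have "real (size (mset (rows_GtH (nf i) emb (map (nth G) idx) H))) \<le> (real (nf N) + max W 0 / a) * real n"
    for G idx
    using i(3) by (simp add: rows_GtH_def)
  with T have "test_set n emb C p (mset (rows_GtH (nf i) emb (map (nth G) idx) H)) \<and>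
      determine_codeword_spec u n emb C (mset (rows_GtH (nf i) emb (map (nth G) idx) H))
        (nat \<lceil>c / - ln p * ln (real n)\<rceil>) B c"
    if "gen_matrix (nf i) (Cf i) G" "distinct idx" "length idx = n - k" "\<forall>l\<in>set idx. l < kf i"
    for G idx
    using test_set_determine_codeword_spec[OF _ n c _ B] that by blast
  with i show ?thesis
    by blast
qed

theorem theorem1:
  fixes emb :: "'f::{finite,field} \<Rightarrow> 'e::{finite,field}"
    and u :: nat
    and Cf :: "nat \<Rightarrow> (nat \<Rightarrow> 'e) set"
    and nf kf df :: "nat \<Rightarrow> nat"
    and \<alpha> \<beta> W c :: real
  assumes ext: "field_ext emb u" and u: "u \<ge> 1"
    and codes: "\<forall>i\<ge>1. lin_code_d (nf i) (kf i) (df i) (Cf i)"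
    and n_lim: "filterlim nf at_top sequentially"
    and k_mono: "\<forall>i\<ge>1. kf i \<le> kf (Suc i)"
    and \<alpha>: "0 < \<alpha>" "\<alpha> < 1" "liminf (\<lambda>i. ereal (real (kf i) / real (nf i))) \<ge> ereal \<alpha>"
    and \<beta>: "0 < \<beta>" "\<beta> < 1" "liminf (\<lambda>i. ereal (real (df i) / real (nf i))) \<ge> ereal \<beta>"
    and W: "\<forall>i\<ge>2. real (nf i) \<le> W * real (nf (i - 1))"
    and c: "c > 0"
  shows "\<exists>R1 A B p0. R1 > 0 \<and> A > 0 \<and> B > 0 \<and> 0 < p0 \<and> p0 < 1 \<and>
    (\<forall>n k (C :: (nat \<Rightarrow> 'f) set) H.
       n \<ge> 2 \<and> k < n \<and> lin_code n k C \<and> parity_check n k C H \<longrightarrow>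
       (\<exists>i\<ge>1. kf i \<ge> n - k \<and> real (nf i) \<le> A * real n \<and>
          (\<forall>G idx. gen_matrix (nf i) (Cf i) G \<and> distinct idx \<and> length idx = n - k
                  \<and> (\<forall>l\<in>set idx. l < kf i) \<longrightarrow>
             (let S = mset (rows_GtH (nf i) emb (map (\<lambda>l. G ! l) idx) H);
                  R = nat \<lceil>R1 * ln (real n)\<rceil>
              in test_set n emb C p0 S \<and>
                 real (storage u n S) \<le> B * real u * real n ^ 2 \<and>
                 (\<forall>x\<in>vecs n.
                    (\<forall>(b, ops)\<in>set_pmf (determine_codeword u n emb S R x).
                        real ops \<le> B * real u * real n * ln (real n)) \<and>
                    (x \<in> C \<longrightarrow> (\<forall>(b, ops)\<in>set_pmf (determine_codeword u n emb S R x). b)) \<and>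
                    (x \<notin> C \<longrightarrow> measure_pmf.prob (determine_codeword u n emb S R x) {(b, ops). b}
                                 \<le> real n powr (- c)))))))"
proof -
  define p0 where "p0 = 1 - \<beta> / 2"
  define R1 where "R1 = c / - ln p0"
  have p0: "0 < p0" "p0 < 1" and R1: "0 < R1"
    using \<beta> c by (auto simp: p0_def R1_def divide_pos_neg)
  have "\<alpha> / 2 < \<alpha>" "\<beta> / 2 < \<beta>"
    using \<alpha>(1) \<beta>(1) by simp_all
  from eventually_conj[OF liminf_ratio_eventually_gt[OF \<alpha>(3) this(1) n_lim]
      eventually_conj[OF liminf_ratio_eventually_gt[OF \<beta>(3) this(2) n_lim] eventually_ge_at_top[of 1]]]
  obtain N where N: "1 \<le> N" and large: "\<forall>i\<ge>N. \<alpha> / 2 * real (nf i) < real (kf i) \<and> 0 < nf i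
      \<and> (1 - p0) * real (nf i) \<le> real (df i)"
    unfolding eventually_sequentially p0_def by (auto intro: less_imp_le)
  define A where "A = real (nf N) + max W 0 / (\<alpha> / 2)"
  define B where "B = A + 2 * R1 + 2 / ln 2"
  have A: "0 < A"
    using large N \<alpha>(1) by (auto simp: A_def intro!: add_pos_nonneg)
  have B: "A + 2 * (c / - ln p0) + 2 / ln 2 \<le> B" and "0 < B"
    using A R1 by (simp_all add: B_def R1_def add_pos_pos)
  \<comment> \<open>k_mono and u \<ge> 1 are not needed: the least index of sufficient dimension is used.\<close>
  show ?thesis
    unfolding Let_def
    by (intro exI[of _ R1] exI[of _ A] exI[of _ B] exI[of _ p0] conjI R1 A \<open>0 < B\<close> p0 allI impI)
      (rule code_family_determine_codeword[OF ext codes n_lim W half_gt_zero[OF \<alpha>(1)] p0 N large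
          less_imp_le[OF c] B[unfolded A_def], folded A_def R1_def,
          unfolded determine_codeword_spec_def]; simp)
qed

end
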